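(* Let $a,b,c>0$ and let $F(x)=F(a,b;c;x)$ for $|x|<1$. Then: (1) If $ab/(a+b+1)<c$, then $\log F(x)$ is convex on $(0,1)$. In particular, $F((x+y)/2)\le\sqrt{F(x)F(y)}$ for all $x,y\in(0,1)$, with equality if and only if $x=y$. (2) If $(a-c)(b-c)>0$, then $t\mapsto\log F(1-e^{-t})$ is concave on $(0,\infty)$. In particular, $\sqrt{F(x)F(y)}\le F\big(1-\sqrt{(1-x)(1-y)}\big)$ for all $x,y\in(0,1)$, with equality if and only if $x=y$. (3) If $a+b\ge c$, then $t\mapsto F(1-e^{-t})$ is convex on $(0,\infty)$. In particular, $F\big(1-\sqrt{(1-x)(1-y)}\big)\le (F(x)+F(y))/2$ for all $x,y\in(0,1)$, with equality if and only if $x=y$.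
   Context: $F(a,b;c;x)={}_2F_1(a,b;c;x)=\sum_{n=0}^\infty\frac{(a,n)(b,n)}{(c,n)\,n!}x^n$ for $|x|<1$ is the Gaussian hypergeometric function, where $(a,0)=1$ and $(a,n)=a(a+1)\cdots(a+n-1)$ for $n\ge1$. *)

theory Defs
  imports "HOL-Analysis.Analysis"
begin

definition hyp2F1 :: "real \<Rightarrow> real \<Rightarrow> real \<Rightarrow> real \<Rightarrow> real" where
  "hyp2F1 a b c x = (\<Sum>n. pochhammer a n * pochhammer b n / (pochhammer c n * fact n) * x ^ n)"

end

theory Submission
  imports Defs "HOL-Real_Asymp.Real_Asymp"
begin

text \<open>
  Write F for F(a,b;c;-), u = F'/F for its logarithmic derivative and x = 1 - e^(-t), so that
  d/dt = (1 - x) d/dx and the t-midpoint of x and y is 1 - sqrt((1 - x)(1 - y)). The three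
  statements then amount to u' > 0, (1 - x) u' < u and F' < (1 - x) F'' on (0,1); strict
  convexity gives the strict midpoint inequalities off the diagonal.

  All three signs come from the hypergeometric equation
  x(1 - x) F'' + (c - (a + b + 1) x) F' - a b F = 0, which for u is the Riccati equation
  x(1 - x) u' = a b - (c - (a + b + 1) x) u - x(1 - x) u^2. In each case x(1 - x) (resp. x)
  times the quantity in question is an explicit function of x and u (resp. F, F') vanishing at 0.
  Its derivative is positive at 0 under the hypothesis on a, b, c, and at any other zero in (0,1)
  the derivative term of the differential equation drops out, leaving an algebraic expression
  that is again positive. A function whose derivative is positive at each of its zeros cannot
  leave the positive half-line.
\<close>

section \<open>Zeros and convexity of real functions\<close>

lemma continuous_on_first_zero:
  fixes \<phi> :: "real \<Rightarrow> real"
  assumes "l \<le> r" and cont: "continuous_on {l..r} \<phi>" and "\<phi> l > 0" and "\<phi> r \<le> 0"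
  obtains z where "l < z" "z \<le> r" "\<phi> z = 0" "\<And>y. l \<le> y \<Longrightarrow> y < z \<Longrightarrow> \<phi> y > 0"
proof -
  define S where "S = {y \<in> {l..r}. \<phi> y \<le> 0}"
  define z where "z = Inf S"
  have "closed S"
    unfolding S_def by (rule continuous_on_closed_Collect_le[OF cont continuous_on_const]) simp
  moreover have "r \<in> S" "bdd_below S"
    using assms by (auto simp: S_def intro: bdd_belowI[of _ l])
  ultimately have "z \<in> S"
    unfolding z_def using closed_contains_Inf by blast
  then have z: "l < z" "z \<le> r" "\<phi> z \<le> 0"
    using \<open>\<phi> l > 0\<close> by (auto simp: S_def order.order_iff_strict)
  have below: "\<phi> y > 0" if "l \<le> y" "y < z" for y
  proof (rule ccontr)
    assume "\<not> \<phi> y > 0"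
    then have "y \<in> S" using that z by (auto simp: S_def)
    then have "z \<le> y" unfolding z_def using \<open>bdd_below S\<close> by (rule cInf_lower)
    with that show False by simp
  qed
  have "continuous_on {l..z} \<phi>"
    using cont by (rule continuous_on_subset) (use z in auto)
  then obtain z' where "l \<le> z'" "z' \<le> z" "\<phi> z' = 0"
    using IVT2'[of \<phi> z 0 l] z \<open>\<phi> l > 0\<close> by auto
  with below have "\<phi> z = 0"
    by (cases "z' = z") force+
  with z below show ?thesis by (intro that)
qed

lemma DERIV_pos_at_zeros_imp_pos:
  fixes \<phi> \<phi>' :: "real \<Rightarrow> real"
  assumes "\<phi> l = 0"
    and deriv: "\<And>y. l \<le> y \<Longrightarrow> y < r \<Longrightarrow> (\<phi> has_real_derivative \<phi>' y) (at y)"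
    and crossing: "\<And>y. l \<le> y \<Longrightarrow> y < r \<Longrightarrow> \<phi> y = 0 \<Longrightarrow> \<phi>' y > 0"
    and "l < x" "x < r"
  shows "\<phi> x > 0"
proof (rule ccontr)
  assume "\<not> \<phi> x > 0"
  have "l < r" using \<open>l < x\<close> \<open>x < r\<close> by simp
  obtain d where d: "d > 0" "\<And>h. 0 < h \<Longrightarrow> h < d \<Longrightarrow> \<phi> l < \<phi> (l + h)"
    using DERIV_pos_inc_right[OF deriv crossing, of l] \<open>\<phi> l = 0\<close> \<open>l < r\<close> by auto
  define p where "p = l + min d (x - l) / 2"
  have "p - l < d" "l < p" "p < x"
    using d(1) \<open>l < x\<close> by (simp_all add: p_def min_def field_simps)
  then have p: "l < p" "p < x" "\<phi> p > 0"
    using d(2)[of "p - l"] \<open>\<phi> l = 0\<close> by auto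
  have "continuous_on {p..x} \<phi>"
    using p \<open>x < r\<close> by (intro continuous_at_imp_continuous_on ballI DERIV_isCont[OF deriv]) auto
  then obtain z where z: "p < z" "z \<le> x" "\<phi> z = 0" and pos: "\<And>y. p \<le> y \<Longrightarrow> y < z \<Longrightarrow> \<phi> y > 0"
    using continuous_on_first_zero[of p x \<phi>] p \<open>\<not> \<phi> x > 0\<close> by auto
  obtain e where e: "e > 0" "\<And>h. 0 < h \<Longrightarrow> h < e \<Longrightarrow> \<phi> (z - h) < \<phi> z"
    using DERIV_pos_inc_left[OF deriv crossing, of z] z p \<open>l < x\<close> \<open>x < r\<close> by auto
  define h where "h = min e (z - p) / 2"
  have "0 < h" "h < e" "p < z - h"
    using e(1) z(1) by (simp_all add: h_def min_def field_simps)
  then have "\<phi> (z - h) < 0" "\<phi> (z - h) > 0"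
    using e(2)[of h] z pos[of "z - h"] by auto
  then show False by simp
qed

lemma f''_gt0_imp_strict_midpoint_convex:
  fixes f :: "real \<Rightarrow> real"
  assumes "convex C"
    and f': "\<And>x. x \<in> C \<Longrightarrow> (f has_real_derivative f' x) (at x)"
    and f'': "\<And>x. x \<in> C \<Longrightarrow> (f' has_real_derivative f'' x) (at x)"
    and pos: "\<And>x. x \<in> C \<Longrightarrow> f'' x > 0"
    and "x \<in> C" "y \<in> C" "x \<noteq> y"
  shows "f ((x + y) / 2) < (f x + f y) / 2"
  using \<open>x \<in> C\<close> \<open>y \<in> C\<close> \<open>x \<noteq> y\<close>
proof (induction x y rule: linorder_wlog)
  case (le x y)
  then have "x < y" by simp
  have sub: "{x..y} \<subseteq> C"
    using atMostAtLeast_subset_convex[OF \<open>convex C\<close> le.prems(1,2) \<open>x < y\<close>] by auto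
  define m where "m = (x + y) / 2"
  have m: "x < m" "m < y" "m - x = y - m"
    using \<open>x < y\<close> by (simp_all add: m_def field_simps)
  have "\<forall>t. x \<le> t \<and> t \<le> y \<longrightarrow> (f has_real_derivative f' t) (at t)"
    using sub f' by auto
  then obtain \<xi> \<eta> where \<xi>: "x < \<xi>" "\<xi> < m" "f m - f x = (m - x) * f' \<xi>"
    and \<eta>: "m < \<eta>" "\<eta> < y" "f y - f m = (y - m) * f' \<eta>"
    using MVT2[of x m f f'] MVT2[of m y f f'] m by (metis order.trans order.strict_implies_order)
  have "f' \<xi> < f' \<eta>"
  proof (rule DERIV_pos_imp_increasing[of \<xi> \<eta> f'])
    show "\<xi> < \<eta>" using \<xi> \<eta> by simp
    show "\<exists>l. (f' has_real_derivative l) (at t) \<and> l > 0" if "\<xi> \<le> t" "t \<le> \<eta>" for t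
      using that \<xi> \<eta> m sub f'' pos by (meson atLeastAtMost_iff less_le_not_le order.trans subsetD)
  qed
  then have "f m - f x < f y - f m"
    using \<xi>(3) \<eta>(3) m by simp
  then show ?case by (simp add: m_def)
qed (simp add: add.commute)

lemma convex_on_comp_one_minus_exp_neg:
  fixes h h' h'' :: "real \<Rightarrow> real"
  assumes h': "\<And>x. 0 < x \<Longrightarrow> x < 1 \<Longrightarrow> (h has_real_derivative h' x) (at x)"
    and h'': "\<And>x. 0 < x \<Longrightarrow> x < 1 \<Longrightarrow> (h' has_real_derivative h'' x) (at x)"
    and pos: "\<And>x. 0 < x \<Longrightarrow> x < 1 \<Longrightarrow> h' x < (1 - x) * h'' x"
  shows "convex_on {0<..} (\<lambda>t. h (1 - exp (- t)))"
    and "\<And>x y. x \<in> {0<..<1} \<Longrightarrow> y \<in> {0<..<1} \<Longrightarrow> x \<noteq> y \<Longrightarrow>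
           h (1 - sqrt ((1 - x) * (1 - y))) < (h x + h y) / 2"
proof -
  define f where "f t = h (1 - exp (- t))" for t
  define f' where "f' t = h' (1 - exp (- t)) * exp (- t)" for t
  define f'' where "f'' t = exp (- t) * (exp (- t) * h'' (1 - exp (- t)) - h' (1 - exp (- t)))" for t
  have x_of_t: "0 < 1 - exp (- t)" "1 - exp (- t) < 1" if "t \<in> {0<..}" for t :: real
    using that by auto
  have dx: "((\<lambda>t. 1 - exp (- t)) has_real_derivative exp (- t)) (at t)" for t :: real
    by (auto intro!: derivative_eq_intros)
  have dexp: "((\<lambda>t. exp (- t)) has_real_derivative - exp (- t)) (at t)" for t :: real
    by (auto intro!: derivative_eq_intros)
  have df: "(f has_real_derivative f' t) (at t)" if "t \<in> {0<..}" for t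
    unfolding f_def[abs_def] f'_def by (rule DERIV_chain2[OF h'[OF x_of_t[OF that]] dx])
  have df': "(f' has_real_derivative f'' t) (at t)" if "t \<in> {0<..}" for t
    unfolding f'_def[abs_def]
    by (rule DERIV_mult[OF DERIV_chain2[OF h''[OF x_of_t[OF that]] dx] dexp, THEN DERIV_cong])
      (simp add: f''_def algebra_simps)
  have f''_pos: "f'' t > 0" if "t \<in> {0<..}" for t
    using pos[OF x_of_t[OF that]] by (simp add: f''_def)
  have "convex_on {0<..} f"
    by (rule f''_ge0_imp_convex[OF _ df df']) (auto intro: less_imp_le f''_pos)
  then show "convex_on {0<..} (\<lambda>t. h (1 - exp (- t)))"
    by (simp add: f_def[abs_def])
  fix x y :: real
  assume x: "x \<in> {0<..<1}" and y: "y \<in> {0<..<1}" and "x \<noteq> y"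
  define s where "s = - ln (1 - x)"
  define t where "t = - ln (1 - y)"
  have st: "s > 0" "t > 0" "s \<noteq> t" "f s = h x" "f t = h y"
    using x y \<open>x \<noteq> y\<close> by (auto simp: s_def t_def f_def)
  have "exp (- ((s + t) / 2)) ^ 2 = exp (- s) * exp (- t)"
    by (simp add: power2_eq_square flip: exp_add)
  also have "\<dots> = (1 - x) * (1 - y)"
    using x y by (simp add: s_def t_def)
  finally have "sqrt ((1 - x) * (1 - y)) = exp (- ((s + t) / 2))"
    by (intro real_sqrt_unique) simp_all
  then have "f ((s + t) / 2) = h (1 - sqrt ((1 - x) * (1 - y)))"
    by (simp add: f_def)
  moreover have "f ((s + t) / 2) < (f s + f t) / 2"
    using st
    by (intro f''_gt0_imp_strict_midpoint_convex[OF convex_real_interval(3) df df' f''_pos]) simp_all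
  ultimately show "h (1 - sqrt ((1 - x) * (1 - y))) < (h x + h y) / 2"
    using st by simp
qed

lemma le_and_eq_iff_of_less_off_diagonal:
  fixes L R :: "'a \<Rightarrow> 'a \<Rightarrow> 'b :: order"
  assumes "\<And>x y. x \<in> S \<Longrightarrow> y \<in> S \<Longrightarrow> x \<noteq> y \<Longrightarrow> L x y < R x y"
    and "\<And>x. x \<in> S \<Longrightarrow> L x x = R x x"
  shows "\<forall>x\<in>S. \<forall>y\<in>S. L x y \<le> R x y \<and> (L x y = R x y \<longleftrightarrow> x = y)"
  using assms by (metis order.order_iff_strict order.strict_implies_not_eq)

lemma ln_sqrt_mult: "p > 0 \<Longrightarrow> q > 0 \<Longrightarrow> ln (sqrt (p * q)) = (ln p + ln q) / 2"
  by (simp add: ln_sqrt ln_mult)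

lemma sums_powser_times_x:
  fixes f :: "nat \<Rightarrow> real"
  assumes "(\<lambda>n. f (Suc n) * x ^ n) sums s" and "f 0 = 0"
  shows "(\<lambda>n. f n * x ^ n) sums (x * s)"
proof -
  have "(\<lambda>n. f (Suc n) * x ^ Suc n) sums (x * s)"
    using sums_mult[OF assms(1), of x] by (simp add: algebra_simps)
  from sums_Suc[of "\<lambda>n. f n * x ^ n", OF this] show ?thesis
    using assms(2) by simp
qed

lemma Riccati_root_bound:
  fixes a b c s u y :: real
  assumes "a * b < c * s" and "c > 0" and "0 < y" "y < 1" and "u > 0"
    and root: "a * b = (c - s * y) * u + y * (1 - y) * u ^ 2"
  shows "(1 - 2 * y) * u < s"
proof (rule ccontr)
  assume "\<not> (1 - 2 * y) * u < s"
  moreover have "y * u > 0"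
    using \<open>0 < y\<close> \<open>u > 0\<close> by simp
  ultimately have "s \<le> u" "s \<le> (1 - y) * u"
    by (simp_all add: algebra_simps)
  then have "c * s \<le> c * u" "0 \<le> y * u * ((1 - y) * u - s)"
    using assms(2-5) by simp_all
  moreover have "a * b = c * u + y * u * ((1 - y) * u - s)"
    using root by (simp add: algebra_simps power2_eq_square)
  ultimately show False
    using \<open>a * b < c * s\<close> by simp
qed

lemma quadratic_root_not_between:
  fixes a b c w y :: real
  assumes "a > 0" "b > 0" "0 < y" "y < 1" "w > 0" and "(a - c) * (b - c) > 0"
    and root: "y * w ^ 2 + (c - (a + b) * y) * w = a * b * (1 - y)"
  shows "(w - a) * (w - b) > 0"
proof -
  \<comment> \<open>Q p = y p^2 + (c - (a + b) y) p - a b (1 - y) factors as (p - w) K p with K positive for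
      p > 0, and Q a * Q b = a b (a - c) (b - c).\<close>
  define K where "K p = y * (p + w) + c - (a + b) * y" for p
  have "w * (y * w + c - (a + b) * y) = a * b * (1 - y)"
    using root by (simp add: algebra_simps power2_eq_square)
  also have "\<dots> > 0"
    using assms(1-4) by simp
  finally have "w * (y * w + c - (a + b) * y) > 0" .
  then have "y * w + c - (a + b) * y > 0"
    using \<open>w > 0\<close> by (simp add: zero_less_mult_iff)
  moreover have "y * a > 0" "y * b > 0"
    using assms(1-3) by simp_all
  ultimately have "K a > 0" "K b > 0"
    by (simp_all add: K_def algebra_simps)
  then have K_pos: "K a * K b > 0"
    by simp
  have K_a: "(a - w) * K a = a * (c - b)" and K_b: "(b - w) * K b = b * (c - a)"
    using root by (simp_all add: K_def algebra_simps power2_eq_square)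
  have "((w - a) * (w - b)) * (K a * K b) = ((a - w) * K a) * ((b - w) * K b)"
    by (simp add: algebra_simps)
  also have "\<dots> = a * b * ((a - c) * (b - c))"
    unfolding K_a K_b by (simp add: algebra_simps)
  also have "\<dots> > 0"
    using assms by simp
  finally show ?thesis
    using K_pos by (simp add: zero_less_mult_iff)
qed

section \<open>The hypergeometric series and its differential equation\<close>

definition hyp2F1_coeff :: "real \<Rightarrow> real \<Rightarrow> real \<Rightarrow> nat \<Rightarrow> real" where
  "hyp2F1_coeff a b c n = pochhammer a n * pochhammer b n / (pochhammer c n * fact n)"

definition hyp2F1' :: "real \<Rightarrow> real \<Rightarrow> real \<Rightarrow> real \<Rightarrow> real" where
  "hyp2F1' a b c x = (\<Sum>n. diffs (hyp2F1_coeff a b c) n * x ^ n)"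

definition hyp2F1'' :: "real \<Rightarrow> real \<Rightarrow> real \<Rightarrow> real \<Rightarrow> real" where
  "hyp2F1'' a b c x = (\<Sum>n. diffs (diffs (hyp2F1_coeff a b c)) n * x ^ n)"

definition hyp2F1_logderiv :: "real \<Rightarrow> real \<Rightarrow> real \<Rightarrow> real \<Rightarrow> real" where
  "hyp2F1_logderiv a b c x = hyp2F1' a b c x / hyp2F1 a b c x"

definition hyp2F1_logderiv' :: "real \<Rightarrow> real \<Rightarrow> real \<Rightarrow> real \<Rightarrow> real" where
  "hyp2F1_logderiv' a b c x = hyp2F1'' a b c x / hyp2F1 a b c x - hyp2F1_logderiv a b c x ^ 2"

lemma hyp2F1_eq_powser: "hyp2F1 a b c x = (\<Sum>n. hyp2F1_coeff a b c n * x ^ n)"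
  unfolding hyp2F1_def hyp2F1_coeff_def ..

lemma hyp2F1_at_0:
  "hyp2F1 a b c 0 = 1"
  "hyp2F1' a b c 0 = a * b / c"
  "hyp2F1'' a b c 0 = a * (a + 1) * b * (b + 1) / (c * (c + 1))"
  unfolding hyp2F1_eq_powser hyp2F1'_def hyp2F1''_def powser_zero
  by (simp_all add: diffs_def hyp2F1_coeff_def pochhammer_Suc numeral_2_eq_2)

lemma hyp2F1_logderiv_at_0: "hyp2F1_logderiv a b c 0 = a * b / c"
  by (simp add: hyp2F1_logderiv_def hyp2F1_at_0)

context
  fixes a b c :: real
  assumes a: "a > 0" and b: "b > 0" and c: "c > 0"
begin

lemma hyp2F1_coeff_pos: "hyp2F1_coeff a b c n > 0"
  unfolding hyp2F1_coeff_def using a b c by (intro divide_pos_pos mult_pos_pos pochhammer_pos) auto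

lemma hyp2F1_coeff_Suc:
  "real (Suc n) * (c + n) * hyp2F1_coeff a b c (Suc n) = (a + n) * (b + n) * hyp2F1_coeff a b c n"
proof -
  have "pochhammer c n \<noteq> 0" "c + n \<noteq> 0"
    using c by (auto simp: pochhammer_eq_0_iff)
  then show ?thesis
    unfolding hyp2F1_coeff_def pochhammer_Suc fact_Suc of_nat_mult by (simp add: divide_simps)
qed

lemma conv_radius_hyp2F1_coeff: "conv_radius (hyp2F1_coeff a b c) = 1"
proof (rule conv_radius_ratio_limit_nonzero[of _ 1])
  let ?A = "hyp2F1_coeff a b c"
  have "norm (?A n) / norm (?A (Suc n)) = (c + n) * (n + 1) / ((a + n) * (b + n))" for n
  proof -
    have "(a + n) * (b + n) > 0" "hyp2F1_coeff a b c n > 0" "hyp2F1_coeff a b c (Suc n) > 0"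
      using a b hyp2F1_coeff_pos by (simp_all add: add_pos_nonneg)
    then show ?thesis
      using hyp2F1_coeff_Suc[of n] by (simp add: field_simps)
  qed
  moreover have "(\<lambda>n. (c + real n) * (1 + real n) / ((a + real n) * (b + real n))) \<longlonglongrightarrow> 1"
    by real_asymp
  ultimately show "(\<lambda>n. norm (?A n) / norm (?A (Suc n))) \<longlonglongrightarrow> 1"
    by simp
qed simp_all

lemma summable_hyp2F1:
  assumes "\<bar>x\<bar> < 1"
  shows "summable (\<lambda>n. hyp2F1_coeff a b c n * x ^ n)"
    and "summable (\<lambda>n. diffs (hyp2F1_coeff a b c) n * x ^ n)"
    and "summable (\<lambda>n. diffs (diffs (hyp2F1_coeff a b c)) n * x ^ n)"
proof -
  have *: "summable (\<lambda>n. hyp2F1_coeff a b c n * x ^ n)" if "\<bar>x\<bar> < 1" for x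
    by (rule summable_in_conv_radius) (use that in \<open>simp add: conv_radius_hyp2F1_coeff\<close>)
  have **: "summable (\<lambda>n. diffs (hyp2F1_coeff a b c) n * x ^ n)" if "\<bar>x\<bar> < 1" for x
    by (rule termdiff_converges[of x 1]) (use that * in auto)
  show "summable (\<lambda>n. hyp2F1_coeff a b c n * x ^ n)"
    and "summable (\<lambda>n. diffs (hyp2F1_coeff a b c) n * x ^ n)"
    using assms by (fact * **)+
  show "summable (\<lambda>n. diffs (diffs (hyp2F1_coeff a b c)) n * x ^ n)"
    by (rule termdiff_converges[of x 1]) (use assms ** in auto)
qed

lemma has_real_derivative_hyp2F1:
  assumes "\<bar>x\<bar> < 1"
  shows "(hyp2F1 a b c has_real_derivative hyp2F1' a b c x) (at x)"
    and "(hyp2F1' a b c has_real_derivative hyp2F1'' a b c x) (at x)"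
  unfolding hyp2F1_eq_powser[abs_def] hyp2F1'_def[abs_def] hyp2F1''_def
  using assms by (auto intro!: termdiffs_strong'[of 1] summable_hyp2F1)

lemma hyp2F1_pos:
  assumes "0 \<le> x" "x < 1"
  shows "hyp2F1 a b c x > 0" and "hyp2F1' a b c x > 0"
proof -
  have "\<bar>x\<bar> < 1" using assms by simp
  show "hyp2F1 a b c x > 0"
    unfolding hyp2F1_eq_powser using assms hyp2F1_coeff_pos
    by (intro suminf_pos2[where i = 0] summable_hyp2F1 \<open>\<bar>x\<bar> < 1\<close>) (auto simp: less_imp_le)
  show "hyp2F1' a b c x > 0"
    unfolding hyp2F1'_def using assms hyp2F1_coeff_pos
    by (intro suminf_pos2[where i = 0] summable_hyp2F1 \<open>\<bar>x\<bar> < 1\<close>) (auto simp: diffs_def less_imp_le)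
qed

lemma hyp2F1_ode:
  assumes "\<bar>x\<bar> < 1"
  shows "x * (1 - x) * hyp2F1'' a b c x + (c - (a + b + 1) * x) * hyp2F1' a b c x
           - a * b * hyp2F1 a b c x = 0"
proof -
  let ?A = "hyp2F1_coeff a b c" and ?F = "hyp2F1 a b c x"
    and ?F' = "hyp2F1' a b c x" and ?F'' = "hyp2F1'' a b c x"
  have F: "(\<lambda>n. ?A n * x ^ n) sums ?F"
    and F': "(\<lambda>n. diffs ?A n * x ^ n) sums ?F'"
    and F'': "(\<lambda>n. diffs (diffs ?A) n * x ^ n) sums ?F''"
    using summable_hyp2F1[OF assms, THEN summable_sums]
    by (simp_all add: hyp2F1_eq_powser hyp2F1'_def hyp2F1''_def)
  have xF': "(\<lambda>n. (n * ?A n) * x ^ n) sums (x * ?F')"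
    by (rule sums_powser_times_x) (use F' in \<open>simp_all add: diffs_def\<close>)
  have xF'': "(\<lambda>n. (n * diffs ?A n) * x ^ n) sums (x * ?F'')"
    by (rule sums_powser_times_x) (use F'' in \<open>simp_all add: diffs_def\<close>)
  have xxF'': "(\<lambda>n. (n * (real n - 1) * ?A n) * x ^ n) sums (x * (x * ?F''))"
    by (rule sums_powser_times_x) (use xF'' in \<open>simp_all add: diffs_def algebra_simps\<close>)
  let ?L = "x * ?F'' - x * (x * ?F'') + c * ?F' - (a + b + 1) * (x * ?F') - a * b * ?F"
  have "(\<lambda>n. (n * diffs ?A n) * x ^ n - (n * (real n - 1) * ?A n) * x ^ n + c * (diffs ?A n * x ^ n)
           - (a + b + 1) * ((n * ?A n) * x ^ n) - a * b * (?A n * x ^ n)) sums ?L"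
    (is "(\<lambda>n. ?term n) sums _")
    by (intro sums_diff sums_add sums_mult F F' xF' xF'' xxF'')
  moreover have "?term n = 0" for n
  proof -
    have "?term n = x ^ n * (real (Suc n) * (c + n) * ?A (Suc n) - (a + n) * (b + n) * ?A n)"
      by (simp add: diffs_def algebra_simps)
    then show ?thesis
      unfolding hyp2F1_coeff_Suc by simp
  qed
  ultimately have "(\<lambda>n. 0) sums ?L"
    by simp
  then have "?L = 0"
    using sums_unique2 sums_zero by blast
  then show ?thesis
    by (simp add: algebra_simps)
qed

section \<open>The Riccati equation and the three sign conditions\<close>

lemma hyp2F1_logderiv'_at_0:
  "hyp2F1_logderiv' a b c 0 = a * b * (c * (a + b + 1) - a * b) / (c ^ 2 * (c + 1))"
proof -
  have "c \<noteq> 0" "c + 1 \<noteq> 0"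
    using c by simp_all
  then show ?thesis
    by (simp add: hyp2F1_logderiv'_def hyp2F1_logderiv_at_0 hyp2F1_at_0 power2_eq_square
        divide_simps) (simp add: algebra_simps)
qed

lemma hyp2F1_logderiv_pos: "0 \<le> x \<Longrightarrow> x < 1 \<Longrightarrow> hyp2F1_logderiv a b c x > 0"
  using hyp2F1_pos by (simp add: hyp2F1_logderiv_def)

lemma has_real_derivative_hyp2F1_logderiv:
  assumes "0 \<le> x" "x < 1"
  shows "((\<lambda>x. ln (hyp2F1 a b c x)) has_real_derivative hyp2F1_logderiv a b c x) (at x)"
    and "(hyp2F1_logderiv a b c has_real_derivative hyp2F1_logderiv' a b c x) (at x)"
proof -
  have "\<bar>x\<bar> < 1" and F_pos: "hyp2F1 a b c x > 0"
    using assms hyp2F1_pos by auto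
  note dF = has_real_derivative_hyp2F1[OF \<open>\<bar>x\<bar> < 1\<close>]
  show "((\<lambda>x. ln (hyp2F1 a b c x)) has_real_derivative hyp2F1_logderiv a b c x) (at x)"
    using DERIV_chain2[where g = "hyp2F1 a b c", OF DERIV_ln_divide[OF F_pos] dF(1)]
    by (simp add: hyp2F1_logderiv_def)
  show "(hyp2F1_logderiv a b c has_real_derivative hyp2F1_logderiv' a b c x) (at x)"
    unfolding hyp2F1_logderiv_def[abs_def]
    by (rule DERIV_divide[OF dF(2) dF(1), THEN DERIV_cong])
      (use F_pos in \<open>simp_all add: hyp2F1_logderiv'_def hyp2F1_logderiv_def field_simps
        power2_eq_square\<close>)
qed

lemma hyp2F1_logderiv_Riccati:
  assumes "0 \<le> x" "x < 1"
  shows "x * (1 - x) * hyp2F1_logderiv' a b c x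
           = a * b - (c - (a + b + 1) * x) * hyp2F1_logderiv a b c x
             - x * (1 - x) * hyp2F1_logderiv a b c x ^ 2"
proof -
  let ?F = "hyp2F1 a b c x" and ?F' = "hyp2F1' a b c x" and ?F'' = "hyp2F1'' a b c x"
    and ?u = "hyp2F1_logderiv a b c x"
  have "?F > 0"
    using assms hyp2F1_pos by auto
  have ode: "x * (1 - x) * ?F'' = a * b * ?F - (c - (a + b + 1) * x) * ?F'"
    using hyp2F1_ode[of x] assms by (simp add: algebra_simps)
  have "x * (1 - x) * hyp2F1_logderiv' a b c x = x * (1 - x) * ?F'' / ?F - x * (1 - x) * ?u ^ 2"
    by (simp add: hyp2F1_logderiv'_def algebra_simps)
  also have "\<dots> = (a * b * ?F - (c - (a + b + 1) * x) * ?F') / ?F - x * (1 - x) * ?u ^ 2"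
    unfolding ode ..
  also have "\<dots> = a * b - (c - (a + b + 1) * x) * ?u - x * (1 - x) * ?u ^ 2"
    using \<open>?F > 0\<close> by (simp add: hyp2F1_logderiv_def diff_divide_distrib)
  finally show ?thesis .
qed

lemma hyp2F1_logderiv'_pos:
  assumes "a * b < c * (a + b + 1)" and "0 < x" "x < 1"
  shows "hyp2F1_logderiv' a b c x > 0"
proof -
  define s where "s = a + b + 1"
  define u where "u = hyp2F1_logderiv a b c"
  define u' where "u' = hyp2F1_logderiv' a b c"
  define g where "g y = a * b - (c - s * y) * u y - y * (1 - y) * u y ^ 2" for y
  define g' where "g' y = s * u y - (c - s * y) * u' y - (1 - 2 * y) * u y ^ 2
                          - 2 * y * (1 - y) * u y * u' y" for y
  have dg: "(g has_real_derivative g' y) (at y)" if "0 \<le> y" "y < 1" for y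
    unfolding g_def[abs_def] g'_def u_def u'_def
    by (rule derivative_eq_intros has_real_derivative_hyp2F1_logderiv(2)[OF that] refl | simp)+
  have Riccati: "y * (1 - y) * u' y = g y" if "0 \<le> y" "y < 1" for y
    using hyp2F1_logderiv_Riccati[OF that] by (simp add: g_def s_def u_def u'_def)
  have "g x > 0"
  proof (rule DERIV_pos_at_zeros_imp_pos[OF _ dg])
    show "g 0 = 0"
      using c by (simp add: g_def u_def hyp2F1_logderiv_at_0)
    fix y assume y: "0 \<le> y" "y < 1" "g y = 0"
    show "g' y > 0"
    proof (cases "y = 0")
      case True
      have "g' 0 = a * b * (c * s - a * b) / (c ^ 2 * (c + 1))"
        using c by (simp add: g'_def u_def u'_def s_def hyp2F1_logderiv_at_0 hyp2F1_logderiv'_at_0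
            power2_eq_square divide_simps) (simp add: algebra_simps)
      then show ?thesis
        using True a b c assms(1) by (simp add: s_def)
    next
      case False
      then have "u' y = 0"
        using Riccati[OF y(1,2)] y by simp
      then have "g' y = u y * (s - (1 - 2 * y) * u y)"
        by (simp add: g'_def power2_eq_square algebra_simps)
      moreover have "u y > 0"
        using hyp2F1_logderiv_pos[OF y(1,2)] by (simp add: u_def)
      moreover have "(1 - 2 * y) * u y < s"
        by (rule Riccati_root_bound[of a b c s y "u y"])
          (use assms(1) c False y \<open>u y > 0\<close> in \<open>auto simp: s_def g_def algebra_simps\<close>)
      ultimately show ?thesis
        by simp
    qed
  qed (use assms in auto)
  then have "x * (1 - x) * u' x > 0"
    using Riccati[of x] assms by simp
  moreover have "x * (1 - x) > 0"
    using assms by simp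
  ultimately show ?thesis
    unfolding u'_def by (rule zero_less_mult_pos)
qed

lemma hyp2F1_logderiv'_less:
  assumes "(a - c) * (b - c) > 0" and "0 < x" "x < 1"
  shows "(1 - x) * hyp2F1_logderiv' a b c x < hyp2F1_logderiv a b c x"
proof -
  define u where "u = hyp2F1_logderiv a b c"
  define u' where "u' = hyp2F1_logderiv' a b c"
  \<comment> \<open>w is the t-derivative of ln F (1 - e^(-t)), read at x = 1 - e^(-t).\<close>
  define w where "w y = (1 - y) * u y" for y
  define w' where "w' y = (1 - y) * u' y - u y" for y
  define \<phi> where "\<phi> y = (c - (a + b) * y) * w y + y * w y ^ 2 - a * b * (1 - y)" for y
  define \<phi>' where "\<phi>' y = a * b - (a + b) * w y + (c - (a + b) * y) * w' y + w y ^ 2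
                          + 2 * y * w y * w' y" for y
  have dw: "(w has_real_derivative w' y) (at y)" if "0 \<le> y" "y < 1" for y
    unfolding w_def[abs_def] w'_def u_def u'_def
    by (rule derivative_eq_intros has_real_derivative_hyp2F1_logderiv(2)[OF that] refl | simp)+
  have d\<phi>: "(\<phi> has_real_derivative \<phi>' y) (at y)" if "0 \<le> y" "y < 1" for y
    unfolding \<phi>_def[abs_def] \<phi>'_def
    by (rule derivative_eq_intros dw[OF that] refl | simp)+ (simp add: algebra_simps)
  have Riccati: "y * (1 - y) * w' y = - \<phi> y" if "0 \<le> y" "y < 1" for y
  proof -
    have "y * (1 - y) * w' y = (1 - y) * (y * (1 - y) * u' y) - y * (1 - y) * u y"
      by (simp add: w'_def algebra_simps)
    also have "\<dots> = - \<phi> y"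
      unfolding u'_def hyp2F1_logderiv_Riccati[OF that]
      by (simp add: \<phi>_def w_def u_def algebra_simps power2_eq_square)
    finally show ?thesis .
  qed
  have "\<phi> x > 0"
  proof (rule DERIV_pos_at_zeros_imp_pos[OF _ d\<phi>])
    show "\<phi> 0 = 0"
      using c by (simp add: \<phi>_def w_def u_def hyp2F1_logderiv_at_0)
    fix y assume y: "0 \<le> y" "y < 1" "\<phi> y = 0"
    show "\<phi>' y > 0"
    proof (cases "y = 0")
      case True
      have "\<phi>' 0 = a * b * ((a - c) * (b - c)) / (c ^ 2 * (c + 1))"
        using c by (simp add: \<phi>'_def w_def w'_def u_def u'_def hyp2F1_logderiv_at_0
            hyp2F1_logderiv'_at_0 power2_eq_square divide_simps) (simp add: algebra_simps)
      then show ?thesis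
        using True a b c assms(1) by simp
    next
      case False
      then have "w' y = 0"
        using Riccati[OF y(1,2)] y by simp
      then have "\<phi>' y = (w y - a) * (w y - b)"
        by (simp add: \<phi>'_def power2_eq_square algebra_simps)
      also have "\<dots> > 0"
      proof (rule quadratic_root_not_between[where y = y and w = "w y", OF a b _ _ _ assms(1)])
        show "w y > 0"
          using hyp2F1_logderiv_pos[OF y(1,2)] y by (simp add: w_def u_def)
        show "y * w y ^ 2 + (c - (a + b) * y) * w y = a * b * (1 - y)"
          using y(3) by (simp add: \<phi>_def algebra_simps)
      qed (use False y in auto)
      finally show ?thesis .
    qed
  qed (use assms in auto)
  then have "x * (1 - x) * (- w' x) > 0"
    using Riccati[of x] assms by simp
  moreover have "x * (1 - x) > 0"
    using assms by simp
  ultimately have "- w' x > 0"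
    by (rule zero_less_mult_pos)
  then show ?thesis
    by (simp add: w'_def u_def u'_def)
qed

lemma hyp2F1'_less:
  assumes "c \<le> a + b" and "0 < x" "x < 1"
  shows "hyp2F1' a b c x < (1 - x) * hyp2F1'' a b c x"
proof -
  define F where "F = hyp2F1 a b c"
  define F' where "F' = hyp2F1' a b c"
  define F'' where "F'' = hyp2F1'' a b c"
  define H where "H y = a * b * F y - (c - (a + b) * y) * F' y" for y
  define H' where "H' y = (a * b + a + b) * F' y - (c - (a + b) * y) * F'' y" for y
  have dH: "(H has_real_derivative H' y) (at y)" if "0 \<le> y" "y < 1" for y
  proof -
    have "\<bar>y\<bar> < 1" using that by simp
    from has_real_derivative_hyp2F1[OF this] show ?thesis
      unfolding H_def[abs_def] H'_def F_def F'_def F''_def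
      by (auto intro!: derivative_eq_intros simp: algebra_simps)
  qed
  have ode: "y * ((1 - y) * F'' y - F' y) = H y" if "0 \<le> y" "y < 1" for y
    using hyp2F1_ode[of y] that by (simp add: H_def F_def F'_def F''_def algebra_simps)
  have "H x > 0"
  proof (rule DERIV_pos_at_zeros_imp_pos[OF _ dH])
    show "H 0 = 0"
      using c by (simp add: H_def F_def F'_def hyp2F1_at_0)
    fix y assume y: "0 \<le> y" "y < 1" "H y = 0"
    show "H' y > 0"
    proof (cases "y = 0")
      case True
      have "H' 0 = a * b * (a * b + (a + b - c)) / (c * (c + 1))"
        using c by (simp add: H'_def F'_def F''_def hyp2F1_at_0 divide_simps)
          (simp add: algebra_simps)
      moreover have "a * b * (a * b + (a + b - c)) > 0"
        using a b assms(1) by (simp add: add_pos_nonneg)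
      ultimately show ?thesis
        using True c by simp
    next
      case False
      then have F'': "(1 - y) * F'' y = F' y"
        using ode[OF y(1,2)] y by simp
      have "(1 - y) * H' y
          = (1 - y) * (a * b + a + b) * F' y - (c - (a + b) * y) * ((1 - y) * F'' y)"
        by (simp add: H'_def algebra_simps)
      also have "\<dots> = F' y * (a * b * (1 - y) + (a + b - c))"
        unfolding F'' by (simp add: algebra_simps)
      also have "\<dots> > 0"
        using hyp2F1_pos(2)[OF y(1,2)] a b y assms(1) by (simp add: F'_def add_pos_nonneg)
      finally have "(1 - y) * H' y > 0" .
      then show ?thesis
        using y by (simp add: zero_less_mult_iff)
    qed
  qed (use assms in auto)
  then have "x * ((1 - x) * F'' x - F' x) > 0"
    using ode[of x] assms by simp
  then have "(1 - x) * F'' x - F' x > 0"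
    using assms by (simp add: zero_less_mult_iff)
  then show ?thesis
    by (simp add: F'_def F''_def)
qed

lemma convex_on_ln_hyp2F1:
  assumes "a * b / (a + b + 1) < c"
  shows "convex_on {0<..<1} (\<lambda>x. ln (hyp2F1 a b c x))"
    and "x \<in> {0<..<1} \<Longrightarrow> y \<in> {0<..<1} \<Longrightarrow> x \<noteq> y \<Longrightarrow>
           hyp2F1 a b c ((x + y) / 2) < sqrt (hyp2F1 a b c x * hyp2F1 a b c y)"
proof -
  have "a * b < c * (a + b + 1)"
    using assms a b by (simp add: field_simps)
  then have pos: "hyp2F1_logderiv' a b c x > 0" if "x \<in> {0<..<1}" for x
    using hyp2F1_logderiv'_pos that by auto
  note derivs = has_real_derivative_hyp2F1_logderiv
  have d1: "((\<lambda>x. ln (hyp2F1 a b c x)) has_real_derivative hyp2F1_logderiv a b c x) (at x)"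
    and d2: "(hyp2F1_logderiv a b c has_real_derivative hyp2F1_logderiv' a b c x) (at x)"
    if "x \<in> {0<..<1}" for x
    using derivs that by auto
  show "convex_on {0<..<1} (\<lambda>x. ln (hyp2F1 a b c x))"
    by (rule f''_ge0_imp_convex[OF _ d1 d2]) (auto intro!: less_imp_le pos)
  assume x: "x \<in> {0<..<1}" and y: "y \<in> {0<..<1}" and "x \<noteq> y"
  have F_pos: "hyp2F1 a b c z > 0" if "z \<in> {0<..<1}" for z
    using hyp2F1_pos(1) that by auto
  have "ln (hyp2F1 a b c ((x + y) / 2)) < (ln (hyp2F1 a b c x) + ln (hyp2F1 a b c y)) / 2"
    by (rule f''_gt0_imp_strict_midpoint_convex[where C = "{0<..<1}", OF _ d1 d2 pos])
      (use x y \<open>x \<noteq> y\<close> in simp_all)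
  also have "\<dots> = ln (sqrt (hyp2F1 a b c x * hyp2F1 a b c y))"
    using F_pos x y by (simp add: ln_sqrt_mult)
  finally show "hyp2F1 a b c ((x + y) / 2) < sqrt (hyp2F1 a b c x * hyp2F1 a b c y)"
    using F_pos x y by simp
qed

lemma concave_on_ln_hyp2F1_one_minus_exp:
  assumes "(a - c) * (b - c) > 0"
  shows "concave_on {0<..} (\<lambda>t. ln (hyp2F1 a b c (1 - exp (- t))))"
    and "x \<in> {0<..<1} \<Longrightarrow> y \<in> {0<..<1} \<Longrightarrow> x \<noteq> y \<Longrightarrow>
           sqrt (hyp2F1 a b c x * hyp2F1 a b c y) < hyp2F1 a b c (1 - sqrt ((1 - x) * (1 - y)))"
proof -
  note derivs = has_real_derivative_hyp2F1_logderiv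
  note exp_scale = convex_on_comp_one_minus_exp_neg[of "\<lambda>x. - ln (hyp2F1 a b c x)"
      "\<lambda>x. - hyp2F1_logderiv a b c x" "\<lambda>x. - hyp2F1_logderiv' a b c x"]
  have exp_scale_premises:
    "((\<lambda>x. - ln (hyp2F1 a b c x)) has_real_derivative - hyp2F1_logderiv a b c x) (at x)"
    "((\<lambda>x. - hyp2F1_logderiv a b c x) has_real_derivative - hyp2F1_logderiv' a b c x) (at x)"
    "- hyp2F1_logderiv a b c x < (1 - x) * - hyp2F1_logderiv' a b c x"
    if "0 < x" "x < 1" for x
    using derivs[THEN DERIV_minus] hyp2F1_logderiv'_less[OF assms] that by auto
  show "concave_on {0<..} (\<lambda>t. ln (hyp2F1 a b c (1 - exp (- t))))"
    using exp_scale(1)[OF exp_scale_premises] by (simp add: concave_on_def)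
  assume x: "x \<in> {0<..<1}" and y: "y \<in> {0<..<1}" and "x \<noteq> y"
  define z where "z = 1 - sqrt ((1 - x) * (1 - y))"
  have "sqrt ((1 - x) * (1 - y)) \<le> 1" "sqrt ((1 - x) * (1 - y)) > 0"
    using x y by (auto intro: mult_le_one)
  then have F_pos: "hyp2F1 a b c z > 0" "hyp2F1 a b c x > 0" "hyp2F1 a b c y > 0"
    using hyp2F1_pos(1) x y by (auto simp: z_def)
  have "ln (sqrt (hyp2F1 a b c x * hyp2F1 a b c y))
      = (ln (hyp2F1 a b c x) + ln (hyp2F1 a b c y)) / 2"
    using F_pos by (simp add: ln_sqrt_mult)
  also have "\<dots> < ln (hyp2F1 a b c z)"
    using exp_scale(2)[OF exp_scale_premises x y \<open>x \<noteq> y\<close>] by (simp add: z_def)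
  finally show "sqrt (hyp2F1 a b c x * hyp2F1 a b c y) < hyp2F1 a b c z"
    using F_pos by simp
qed

lemma convex_on_hyp2F1_one_minus_exp:
  assumes "c \<le> a + b"
  shows "convex_on {0<..} (\<lambda>t. hyp2F1 a b c (1 - exp (- t)))"
    and "x \<in> {0<..<1} \<Longrightarrow> y \<in> {0<..<1} \<Longrightarrow> x \<noteq> y \<Longrightarrow>
           hyp2F1 a b c (1 - sqrt ((1 - x) * (1 - y))) < (hyp2F1 a b c x + hyp2F1 a b c y) / 2"
  using convex_on_comp_one_minus_exp_neg[of "hyp2F1 a b c" "hyp2F1' a b c" "hyp2F1'' a b c"]
    has_real_derivative_hyp2F1 hyp2F1'_less[OF assms]
  by auto

end

theorem theorem1p3:
  fixes a b c :: real
  assumes "a > 0" and "b > 0" and "c > 0"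
  shows
   "(a * b / (a + b + 1) < c \<longrightarrow>
       convex_on {0<..<1} (\<lambda>x. ln (hyp2F1 a b c x)) \<and>
       (\<forall>x\<in>{0<..<1}. \<forall>y\<in>{0<..<1}.
          hyp2F1 a b c ((x + y) / 2) \<le> sqrt (hyp2F1 a b c x * hyp2F1 a b c y) \<and>
          (hyp2F1 a b c ((x + y) / 2) = sqrt (hyp2F1 a b c x * hyp2F1 a b c y) \<longleftrightarrow> x = y)))
  \<and> ((a - c) * (b - c) > 0 \<longrightarrow>
       concave_on {0<..} (\<lambda>t. ln (hyp2F1 a b c (1 - exp (- t)))) \<and>
       (\<forall>x\<in>{0<..<1}. \<forall>y\<in>{0<..<1}.
          sqrt (hyp2F1 a b c x * hyp2F1 a b c y) \<le> hyp2F1 a b c (1 - sqrt ((1 - x) * (1 - y))) \<and>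
          (sqrt (hyp2F1 a b c x * hyp2F1 a b c y) = hyp2F1 a b c (1 - sqrt ((1 - x) * (1 - y)))
             \<longleftrightarrow> x = y)))
  \<and> (a + b \<ge> c \<longrightarrow>
       convex_on {0<..} (\<lambda>t. hyp2F1 a b c (1 - exp (- t))) \<and>
       (\<forall>x\<in>{0<..<1}. \<forall>y\<in>{0<..<1}.
          hyp2F1 a b c (1 - sqrt ((1 - x) * (1 - y))) \<le> (hyp2F1 a b c x + hyp2F1 a b c y) / 2 \<and>
          (hyp2F1 a b c (1 - sqrt ((1 - x) * (1 - y))) = (hyp2F1 a b c x + hyp2F1 a b c y) / 2
             \<longleftrightarrow> x = y)))"
proof (intro conjI impI, goal_cases)
  case 1
  then show ?case by (rule convex_on_ln_hyp2F1(1)[OF assms])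
next
  case 2
  show ?case
    by (rule le_and_eq_iff_of_less_off_diagonal)
      (use convex_on_ln_hyp2F1(2)[OF assms 2] hyp2F1_pos(1)[OF assms] in \<open>auto simp: abs_of_pos\<close>)
next
  case 3
  then show ?case by (rule concave_on_ln_hyp2F1_one_minus_exp(1)[OF assms])
next
  case 4
  show ?case
    by (rule le_and_eq_iff_of_less_off_diagonal)
      (use concave_on_ln_hyp2F1_one_minus_exp(2)[OF assms 4] hyp2F1_pos(1)[OF assms]
        in \<open>auto simp: abs_of_pos\<close>)
next
  case 5
  then show ?case by (rule convex_on_hyp2F1_one_minus_exp(1)[OF assms])
next
  case 6
  show ?case
    by (rule le_and_eq_iff_of_less_off_diagonal)
      (use convex_on_hyp2F1_one_minus_exp(2)[OF assms 6] in auto)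
qed

end
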